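(* Let $1\le p<\infty$. The class of weights $A_{\mathrm{loc}}(\mathcal{LM}^{p}(\varphi))$ coincides with $A_{p,\mathrm{loc}}$. Moreover, the constants $[w]_{A_{\mathrm{loc}}(\mathcal{LM}^{p}(\varphi))}$ and $[w]_{A_{p,\mathrm{loc}}}$ are comparable, with constants independent of $w$.
   Context: A weight is a nonnegative locally integrable function on $\mathbb{R}^n$. Let $\varphi$ be a function from the set of Euclidean balls of $\mathbb{R}^n$ to $(0,\infty)$; standing assumptions: $\varphi$ is doubling ($\varphi(2B)\le C\varphi(B)$) and reverse doubling (there are $\delta>0$, $C$ with $\varphi(B_1)/\varphi(B_2)\le C(|B_1|/|B_2|)^\delta$ for balls $B_1\subset B_2$). The weighted local Morrey space $\mathcal{LM}^{p}(\varphi,w)$ consists of measurable $f$ with $\|f\|_{\mathcal{LM}^{p}(\varphi,w)}:=\sup_{R>0}\big(\varphi(B(0,R))^{-1}\int_{B(0,R)}|f|^pw\big)^{1/p}<\infty$. The Köthe dual $X'$ of a Banach lattice $X$ has norm $\|g\|_{X'}:=\sup\{\int|fg|:\|f\|_X\le1\}$. For a ball $B$ let $c_B$ be its center and $r_B$ its radius. $[w]_{A_{\mathrm{loc}}(\mathcal{LM}^{p}(\varphi))}:=\sup_B\|\chi_B\|_{\mathcal{LM}^{p}(\varphi,w)}\|\chi_B\|_{\mathcal{LM}^{p}(\varphi,w)'}/|B|$, the supremum over balls with $|c_B|>4r_B$; $A_{\mathrm{loc}}(\mathcal{LM}^{p}(\varphi))$ is the class where it is finite. For $1<p<\infty$,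 $[w]_{A_{p,\mathrm{loc}}}:=\sup_B w(B)^{1/p}\big(\int_Bw^{1-p'}\big)^{1/p'}/|B|$ and for $p=1$, $[w]_{A_{1,\mathrm{loc}}}:=\sup_B \frac{w(B)}{|B|}\|w^{-1}\chi_B\|_{L^\infty}$, in both cases the supremum over balls with $r_B<|c_B|/4$; $A_{p,\mathrm{loc}}$ is the class where it is finite. *)

theory Defs
  imports "HOL-Analysis.Analysis"
begin

text \<open>Balls B(c,r) with r > 0 are identified with the pair (c,r); a ball function
  phi is a function of centre and radius.  All quantities are ennreal-valued
  (with the ennreal convention 0 * \<infinity> = 0), so that the constants may be infinite.\<close>

definition enn_root :: "real \<Rightarrow> ennreal \<Rightarrow> ennreal" where
  "enn_root q x = (if x = \<infinity> then \<infinity> else ennreal (enn2real x powr q))"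

definition is_weight :: "('a::euclidean_space \<Rightarrow> real) \<Rightarrow> bool" where
  "is_weight w \<longleftrightarrow> (\<forall>x. 0 \<le> w x) \<and> w \<in> borel_measurable lebesgue \<and>
     (\<forall>K. compact K \<longrightarrow> set_integrable lebesgue K w)"

definition doubling :: "('a::euclidean_space \<Rightarrow> real \<Rightarrow> real) \<Rightarrow> bool" where
  "doubling \<phi> \<longleftrightarrow> (\<exists>C. \<forall>c r. 0 < r \<longrightarrow> \<phi> c (2 * r) \<le> C * \<phi> c r)"

definition reverse_doubling :: "('a::euclidean_space \<Rightarrow> real \<Rightarrow> real) \<Rightarrow> bool" where
  "reverse_doubling \<phi> \<longleftrightarrow> (\<exists>\<delta>>0. \<exists>C. \<forall>c1 r1 c2 r2. 0 < r1 \<longrightarrow> 0 < r2 \<longrightarrow>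
      ball c1 r1 \<subseteq> ball c2 r2 \<longrightarrow>
      \<phi> c1 r1 / \<phi> c2 r2 \<le> C * (measure lebesgue (ball c1 r1) / measure lebesgue (ball c2 r2)) powr \<delta>)"

definition lm_norm :: "('a::euclidean_space \<Rightarrow> real \<Rightarrow> real) \<Rightarrow> real \<Rightarrow> ('a \<Rightarrow> real) \<Rightarrow> ('a \<Rightarrow> real) \<Rightarrow> ennreal" where
  "lm_norm \<phi> p w f = (SUP R\<in>{0<..}. enn_root (1/p)
      ((\<integral>\<^sup>+ x\<in>ball 0 R. ennreal (\<bar>f x\<bar> powr p * w x) \<partial>lebesgue) / ennreal (\<phi> 0 R)))"

definition lm_dual_norm :: "('a::euclidean_space \<Rightarrow> real \<Rightarrow> real) \<Rightarrow> real \<Rightarrow> ('a \<Rightarrow> real) \<Rightarrow> ('a \<Rightarrow> real) \<Rightarrow> ennreal" where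
  "lm_dual_norm \<phi> p w g = (SUP f\<in>{f \<in> borel_measurable lebesgue. lm_norm \<phi> p w f \<le> 1}.
      \<integral>\<^sup>+ x. ennreal \<bar>f x * g x\<bar> \<partial>lebesgue)"

definition A_loc_LM_const :: "('a::euclidean_space \<Rightarrow> real \<Rightarrow> real) \<Rightarrow> real \<Rightarrow> ('a \<Rightarrow> real) \<Rightarrow> ennreal" where
  "A_loc_LM_const \<phi> p w = (SUP (c, r)\<in>{(c, r). 0 < r \<and> 4 * r < norm c}.
      lm_norm \<phi> p w (indicator (ball c r)) * lm_dual_norm \<phi> p w (indicator (ball c r))
      / emeasure lebesgue (ball c r))"

text \<open>w^(1-p') for p > 1 (value \<infinity> where w = 0) and w^(-1) for p = 1.\<close>
definition w_dual_power :: "real \<Rightarrow> ('a \<Rightarrow> real) \<Rightarrow> 'a \<Rightarrow> ennreal" where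
  "w_dual_power p w x = (if w x = 0 then \<infinity> else ennreal (w x powr (1 - p / (p - 1))))"

definition w_inv :: "('a \<Rightarrow> real) \<Rightarrow> 'a \<Rightarrow> ennreal" where
  "w_inv w x = (if w x = 0 then \<infinity> else ennreal (1 / w x))"

definition ess_sup_on :: "('a::euclidean_space) set \<Rightarrow> ('a \<Rightarrow> ennreal) \<Rightarrow> ennreal" where
  "ess_sup_on B g = Inf {M. AE x in lebesgue. x \<in> B \<longrightarrow> g x \<le> M}"

definition Ap_loc_const :: "real \<Rightarrow> ('a::euclidean_space \<Rightarrow> real) \<Rightarrow> ennreal" where
  "Ap_loc_const p w =
    (if p = 1 then
       (SUP (c, r)\<in>{(c, r). 0 < r \<and> r < norm c / 4}.
          (\<integral>\<^sup>+ x\<in>ball c r. ennreal (w x) \<partial>lebesgue) / emeasure lebesgue (ball c r)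
          * ess_sup_on (ball c r) (w_inv w))
     else
       (SUP (c, r)\<in>{(c, r). 0 < r \<and> r < norm c / 4}.
          enn_root (1/p) (\<integral>\<^sup>+ x\<in>ball c r. ennreal (w x) \<partial>lebesgue)
          * enn_root ((p - 1) / p) (\<integral>\<^sup>+ x\<in>ball c r. w_dual_power p w x \<partial>lebesgue)
          / emeasure lebesgue (ball c r)))"

end

theory Submission
  imports Defs "HOL-Probability.Essential_Supremum"
begin

text \<open>Fix a ball B = B(c,r) with 4r < |c|. It lies in B(0,2|c|) and misses B(0,R) unless
  R > |c|/2, so doubling and reverse doubling make the local Morrey norm of any function
  supported in B comparable to its norm in L^p(w,B) times \<phi>(B(0,|c|))^(-1/p). Hence the
  norm of \<chi>_B is comparable to w(B)^(1/p) \<phi>^(-1/p), while its Koethe dual norm is comparable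
  to \<phi>^(1/p) times the norm of \<chi>_B in the dual of L^p(w,B). The latter is computed exactly by
  Hoelder's inequality and its extremal functions: it is \<sigma>(B)^(1/p') with \<sigma> = w^(1-p') for
  p > 1, and ess sup_B w^(-1) for p = 1. In the product the powers of \<phi> cancel, ball by ball.\<close>

section \<open>Roots in ennreal and Hoelder's inequality\<close>

lemma enn_root_ennreal: "0 \<le> x \<Longrightarrow> enn_root q (ennreal x) = ennreal (x powr q)"
  by (simp add: enn_root_def)

lemma enn_root_0 [simp]: "enn_root q 0 = 0"
  by (simp add: enn_root_def)

lemma enn_root_top [simp]: "enn_root q top = top"
  by (simp add: enn_root_def)

lemma enn_root_eq_0_iff: "0 < q \<Longrightarrow> enn_root q x = 0 \<longleftrightarrow> x = 0"
  by (cases x) (auto simp: enn_root_def)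

lemma enn_root_eq_top_iff: "enn_root q x = top \<longleftrightarrow> x = top"
  by (cases x) (auto simp: enn_root_def)

lemma enn_root_of_1 [simp]: "enn_root q 1 = 1"
  by (simp add: enn_root_def)

lemma enn_root_1 [simp]: "enn_root 1 x = x"
  by (cases x) (auto simp: enn_root_def)

lemma enn_root_enn_root: "0 < a \<Longrightarrow> 0 < b \<Longrightarrow> enn_root a (enn_root b x) = enn_root (a * b) x"
  by (cases x) (auto simp: enn_root_def powr_powr mult.commute)

lemma enn_root_mono: "0 < q \<Longrightarrow> x \<le> y \<Longrightarrow> enn_root q x \<le> enn_root q y"
  by (cases x; cases y) (auto simp: enn_root_def ennreal_le_iff powr_mono2 top_unique)

lemma enn_root_le_iff: "0 < q \<Longrightarrow> enn_root q x \<le> y \<longleftrightarrow> x \<le> enn_root (1 / q) y"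
proof
  assume "0 < q" "enn_root q x \<le> y"
  then show "x \<le> enn_root (1 / q) y"
    using enn_root_mono[of "1 / q" "enn_root q x" y] by (simp add: enn_root_enn_root)
next
  assume "0 < q" "x \<le> enn_root (1 / q) y"
  then show "enn_root q x \<le> y"
    using enn_root_mono[of q x "enn_root (1 / q) y"] by (simp add: enn_root_enn_root)
qed

lemma enn_root_SUP:
  assumes "0 < q"
  shows "enn_root q (SUP i\<in>I. f i) = (SUP i\<in>I. enn_root q (f i))"
proof -
  have "enn_root q (SUP i\<in>I. f i) \<le> y \<longleftrightarrow> (SUP i\<in>I. enn_root q (f i)) \<le> y" for y
    using assms by (simp add: enn_root_le_iff SUP_le_iff)
  then show ?thesis by (metis order.refl order.antisym)
qed

lemma enn_root_mult: "0 < q \<Longrightarrow> enn_root q (x * y) = enn_root q x * enn_root q y"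
  by (cases x; cases y)
    (auto simp: enn_root_def ennreal_mult[symmetric] powr_mult ennreal_mult_top ennreal_top_mult)

lemma Young_inequality_scaled:
  fixes a b u v :: real
  assumes "0 < a" "0 < b" "0 \<le> u" "0 \<le> v" "0 < \<alpha>" "0 < \<beta>" "\<alpha> + \<beta> = 1"
  shows "u powr \<alpha> * v powr \<beta> \<le> a powr \<alpha> * b powr \<beta> * (\<alpha> / a * u + \<beta> / b * v)"
proof (cases "u = 0 \<or> v = 0")
  case True
  then show ?thesis using assms by auto
next
  case False
  then have "(u / a) powr \<alpha> * (v / b) powr \<beta> \<le> \<alpha> * (u / a) + \<beta> * (v / b)"
    using assms by (intro Youngs_inequality_0) auto
  then have "a powr \<alpha> * b powr \<beta> * ((u / a) powr \<alpha> * (v / b) powr \<beta>)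
      \<le> a powr \<alpha> * b powr \<beta> * (\<alpha> * (u / a) + \<beta> * (v / b))"
    by (rule mult_left_mono) simp
  then show ?thesis using assms by (simp add: powr_divide field_simps)
qed

lemma nn_integral_Holder:
  fixes F G :: "'a \<Rightarrow> real"
  assumes [measurable]: "F \<in> borel_measurable M" "G \<in> borel_measurable M"
    and nonneg: "\<And>x. 0 \<le> F x" "\<And>x. 0 \<le> G x"
    and exps: "0 < \<alpha>" "0 < \<beta>" "\<alpha> + \<beta> = 1"
  shows "(\<integral>\<^sup>+x. ennreal (F x powr \<alpha> * G x powr \<beta>) \<partial>M)
     \<le> enn_root \<alpha> (\<integral>\<^sup>+x. ennreal (F x) \<partial>M) * enn_root \<beta> (\<integral>\<^sup>+x. ennreal (G x) \<partial>M)"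
proof -
  define IF where "IF = (\<integral>\<^sup>+x. ennreal (F x) \<partial>M)"
  define IG where "IG = (\<integral>\<^sup>+x. ennreal (G x) \<partial>M)"
  consider "IF = 0 \<or> IG = 0" | "IF \<noteq> 0" "IG \<noteq> 0" "IF = top \<or> IG = top" | a b where
    "IF = ennreal a" "0 < a" "IG = ennreal b" "0 < b"
    by (metis ennreal_cases ennreal_eq_0_iff not_less)
  then show ?thesis
  proof cases
    case 1
    then have "AE x in M. F x = 0 \<or> G x = 0"
      using nonneg by (auto simp: IF_def IG_def nn_integral_0_iff_AE elim: eventually_mono)
    then have "(\<integral>\<^sup>+x. ennreal (F x powr \<alpha> * G x powr \<beta>) \<partial>M) = 0"
      by (subst nn_integral_0_iff_AE) (auto elim: eventually_mono)
    then show ?thesis by simp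
  next
    case 2
    then have "enn_root \<alpha> IF * enn_root \<beta> IG = top"
      using exps by (auto simp: enn_root_eq_top_iff enn_root_eq_0_iff ennreal_mult_eq_top_iff)
    then show ?thesis by (simp add: IF_def IG_def)
  next
    case 3
    have "(\<integral>\<^sup>+x. ennreal (F x powr \<alpha> * G x powr \<beta>) \<partial>M)
        \<le> (\<integral>\<^sup>+x. ennreal (a powr \<alpha> * b powr \<beta>) *
              (ennreal (\<alpha> / a) * ennreal (F x) + ennreal (\<beta> / b) * ennreal (G x)) \<partial>M)"
      using Young_inequality_scaled[of a b] 3 nonneg exps
      by (intro nn_integral_mono)
        (simp add: ennreal_mult'[symmetric] ennreal_plus[symmetric] ennreal_leI del: ennreal_plus)
    also have "\<dots> = ennreal (a powr \<alpha> * b powr \<beta>) * (ennreal (\<alpha> / a) * IF + ennreal (\<beta> / b) * IG)"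
      by (simp add: IF_def IG_def nn_integral_cmult nn_integral_add)
    also have "\<dots> = enn_root \<alpha> IF * enn_root \<beta> IG"
      using 3 exps by (simp add: enn_root_ennreal ennreal_mult''[symmetric] ennreal_plus[symmetric] del: ennreal_plus)
    finally show ?thesis by (simp add: IF_def IG_def)
  qed
qed

section \<open>Doubling and reverse doubling\<close>

lemma reverse_doubling_almost_increasing:
  fixes \<phi> :: "'a::euclidean_space \<Rightarrow> real \<Rightarrow> real"
  assumes pos: "\<And>c r. 0 < r \<Longrightarrow> 0 < \<phi> c r" and "reverse_doubling \<phi>"
  obtains C where "1 \<le> C" "\<And>c s R. 0 < s \<Longrightarrow> s \<le> R \<Longrightarrow> \<phi> c s \<le> C * \<phi> c R"
proof -
  obtain \<delta> C where "\<delta> > 0" and C: "\<And>c1 r1 c2 r2. 0 < r1 \<Longrightarrow> 0 < r2 \<Longrightarrow>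
      ball c1 r1 \<subseteq> ball c2 r2 \<Longrightarrow>
      \<phi> c1 r1 / \<phi> c2 r2 \<le> C * (measure lebesgue (ball c1 r1) / measure lebesgue (ball c2 r2)) powr \<delta>"
    using assms(2) unfolding reverse_doubling_def by blast
  have "\<phi> c s \<le> max 1 C * \<phi> c R" if "0 < s" "s \<le> R" for c :: 'a and s R :: real
  proof -
    define q where "q = measure lebesgue (ball c s) / measure lebesgue (ball c R)"
    have "measure lebesgue (ball c s) \<le> measure lebesgue (ball c R)"
      using \<open>s \<le> R\<close> by (intro measure_mono_fmeasurable) auto
    then have "q powr \<delta> \<le> 1"
      using \<open>\<delta> > 0\<close> by (intro powr_le1) (auto simp: q_def divide_le_eq_1)
    then have "C * q powr \<delta> \<le> max 1 C"
      using mult_left_le[of "q powr \<delta>" C] mult_nonpos_nonneg[of C "q powr \<delta>"]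
      by (cases "0 \<le> C") auto
    moreover have "\<phi> c s / \<phi> c R \<le> C * q powr \<delta>"
      using C[of s R c c] that subset_ball[of s R c] by (simp add: q_def)
    ultimately have "\<phi> c s / \<phi> c R \<le> max 1 C" by linarith
    then show ?thesis
      using pos[of R c] that by (simp add: divide_le_eq)
  qed
  then show ?thesis by (intro that[of "max 1 C"]) auto
qed

lemma doubling_reverse_doubling_constant:
  fixes \<phi> :: "'a::euclidean_space \<Rightarrow> real \<Rightarrow> real"
  assumes pos: "\<And>c r. 0 < r \<Longrightarrow> 0 < \<phi> c r" and "doubling \<phi>" and "reverse_doubling \<phi>"
  obtains K where "1 \<le> K" "\<And>c s. 0 < s \<Longrightarrow> \<phi> c (2 * s) \<le> K * \<phi> c s"
    "\<And>c s R. 0 < s \<Longrightarrow> s / 2 < R \<Longrightarrow> \<phi> c s \<le> K * \<phi> c R"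
proof -
  obtain D where D: "\<And>c r. 0 < r \<Longrightarrow> \<phi> c (2 * r) \<le> D * \<phi> c r"
    using assms(2) unfolding doubling_def by blast
  obtain C where C: "1 \<le> C" "\<And>c s R. 0 < s \<Longrightarrow> s \<le> R \<Longrightarrow> \<phi> c s \<le> C * \<phi> c R"
    using reverse_doubling_almost_increasing[OF pos assms(3)] by blast
  define K where "K = max 1 D * C"
  have "max 1 D \<le> K"
    using mult_left_mono[of 1 C "max 1 D"] C(1) by (simp add: K_def)
  have "C \<le> K"
    using mult_right_mono[of 1 "max 1 D" C] C(1) by (simp add: K_def)
  have doubling: "\<phi> c (2 * s) \<le> max 1 D * \<phi> c s" if "0 < s" for c s
    using D[OF that, of c] pos[OF that, of c] by (smt (verit) mult_right_mono)
  show ?thesis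
  proof (rule that)
    show "1 \<le> K" using \<open>max 1 D \<le> K\<close> by linarith
    show "\<phi> c (2 * s) \<le> K * \<phi> c s" if "0 < s" for c s
      using doubling[OF that] \<open>max 1 D \<le> K\<close> pos[OF that, of c] by (smt (verit) mult_right_mono)
    show "\<phi> c s \<le> K * \<phi> c R" if "0 < s" "s / 2 < R" for c s R
    proof (cases "s \<le> R")
      case True
      then show ?thesis
        using C(2)[OF \<open>0 < s\<close> True] \<open>C \<le> K\<close> pos[of R c] that by (smt (verit) mult_right_mono)
    next
      case False
      have "\<phi> c s \<le> C * \<phi> c (2 * R)" using C(2)[of s "2 * R"] that by simp
      also have "\<dots> \<le> C * (max 1 D * \<phi> c R)"
        using doubling[of R c] that C(1) by (intro mult_left_mono) auto
      finally show ?thesis by (simp add: K_def mult.commute mult.left_commute)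
    qed
  qed
qed

section \<open>Local Morrey norms of functions supported in a ball\<close>

lemma ball_in_sets_lebesgue [measurable]: "ball c r \<in> sets lebesgue"
  using lmeasurable_ball fmeasurableD by blast

lemma emeasure_lebesgue_ball_neq_top: "emeasure lebesgue (ball c r) \<noteq> top"
  using lmeasurable_ball[of c r] by (simp add: fmeasurable_def)

lemma ball_subset_ball_0:
  assumes "r \<le> norm c"
  shows "ball c r \<subseteq> ball 0 (2 * norm c)"
proof
  fix x assume "x \<in> ball c r"
  then have "norm (x - c) < r" by (simp add: dist_norm norm_minus_commute)
  then show "x \<in> ball 0 (2 * norm c)" using norm_triangle_sub[of x c] assms by simp
qed

lemma ball_disjoint_ball_0: "R \<le> norm c - r \<Longrightarrow> ball c r \<inter> ball 0 R = {}"
  by (rule disjoint_ballI) simp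

lemma divide_ennreal_eq_mult: "0 < y \<Longrightarrow> x / ennreal y = x * ennreal (1 / y)"
  by (simp add: divide_ennreal_def inverse_ennreal divide_inverse)

lemma lm_norm_le_if_supported_in_ball:
  fixes \<phi> :: "'a::euclidean_space \<Rightarrow> real \<Rightarrow> real"
  assumes pos: "\<And>c r. 0 < r \<Longrightarrow> 0 < \<phi> c r" and "0 < p"
    and K: "\<And>s R. 0 < s \<Longrightarrow> s / 2 < R \<Longrightarrow> \<phi> 0 s \<le> K * \<phi> 0 R"
    and r: "0 < r" "2 * r \<le> norm c" and supp: "\<And>x. x \<notin> ball c r \<Longrightarrow> f x = 0"
  shows "lm_norm \<phi> p w f \<le> enn_root (1 / p)
     ((\<integral>\<^sup>+x\<in>ball c r. ennreal (\<bar>f x\<bar> powr p * w x) \<partial>lebesgue) * ennreal (K / \<phi> 0 (norm c)))"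
  unfolding lm_norm_def
proof (rule SUP_least)
  fix R :: real assume "R \<in> {0<..}"
  then have "0 < R" by simp
  let ?I = "\<lambda>S. \<integral>\<^sup>+x\<in>S. ennreal (\<bar>f x\<bar> powr p * w x) \<partial>lebesgue"
  have "?I (ball 0 R) / ennreal (\<phi> 0 R) \<le> ?I (ball c r) * ennreal (K / \<phi> 0 (norm c))"
  proof (cases "R \<le> norm c - r")
    case True
    have vanish: "x \<in> ball 0 R \<Longrightarrow> f x = 0" for x
      using ball_disjoint_ball_0[OF True] supp[of x] by blast
    have "?I (ball 0 R) = 0"
      by (subst nn_integral_cong[where v = "\<lambda>_. 0"]) (use vanish in \<open>auto simp: indicator_def\<close>)
    then show ?thesis by simp
  next
    case False
    moreover have "0 < norm c" using r by linarith
    ultimately have "\<phi> 0 (norm c) \<le> K * \<phi> 0 R" using K[of "norm c" R] r by simp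
    then have "1 / \<phi> 0 R \<le> K / \<phi> 0 (norm c)"
      using pos[of R 0] pos[of "norm c" 0] \<open>0 < R\<close> \<open>0 < norm c\<close> by (simp add: field_simps)
    moreover have "?I (ball 0 R) \<le> ?I (ball c r)"
      using supp by (intro nn_integral_mono) (simp add: indicator_def)
    ultimately show ?thesis
      using pos[of R 0] \<open>0 < R\<close> by (simp add: divide_ennreal_eq_mult mult_mono ennreal_leI)
  qed
  then show "enn_root (1 / p) (?I (ball 0 R) / ennreal (\<phi> 0 R))
      \<le> enn_root (1 / p) (?I (ball c r) * ennreal (K / \<phi> 0 (norm c)))"
    using \<open>0 < p\<close> by (intro enn_root_mono) auto
qed

lemma lm_norm_ge_if_supported_in_ball:
  fixes \<phi> :: "'a::euclidean_space \<Rightarrow> real \<Rightarrow> real"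
  assumes pos: "\<And>c r. 0 < r \<Longrightarrow> 0 < \<phi> c r" and "0 < p"
    and K: "\<And>s. 0 < s \<Longrightarrow> \<phi> 0 (2 * s) \<le> K * \<phi> 0 s"
    and r: "0 < r" "r \<le> norm c" and supp: "\<And>x. x \<notin> ball c r \<Longrightarrow> f x = 0"
  shows "enn_root (1 / p) ((\<integral>\<^sup>+x\<in>ball c r. ennreal (\<bar>f x\<bar> powr p * w x) \<partial>lebesgue)
      * ennreal (1 / (K * \<phi> 0 (norm c)))) \<le> lm_norm \<phi> p w f"
  unfolding lm_norm_def
proof (rule SUP_upper2)
  let ?I = "\<lambda>S. \<integral>\<^sup>+x\<in>S. ennreal (\<bar>f x\<bar> powr p * w x) \<partial>lebesgue"
  have "0 < norm c" using r by linarith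
  then show "2 * norm c \<in> {0<..}" by simp
  have "?I (ball 0 (2 * norm c)) = ?I (ball c r)"
    using supp ball_subset_ball_0[OF r(2)] by (intro nn_integral_cong) (auto simp: indicator_def)
  moreover have "1 / (K * \<phi> 0 (norm c)) \<le> 1 / \<phi> 0 (2 * norm c)"
    using K[of "norm c"] pos[of "2 * norm c" 0] \<open>0 < norm c\<close> by (simp add: frac_le)
  ultimately have "?I (ball c r) * ennreal (1 / (K * \<phi> 0 (norm c)))
      \<le> ?I (ball 0 (2 * norm c)) / ennreal (\<phi> 0 (2 * norm c))"
    using pos[of "2 * norm c" 0] \<open>0 < norm c\<close>
    by (simp add: divide_ennreal_eq_mult mult_left_mono ennreal_leI)
  then show "enn_root (1 / p) (?I (ball c r) * ennreal (1 / (K * \<phi> 0 (norm c))))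
      \<le> enn_root (1 / p) (?I (ball 0 (2 * norm c)) / ennreal (\<phi> 0 (2 * norm c)))"
    using \<open>0 < p\<close> by (intro enn_root_mono) auto
qed

lemma set_nn_integral_ball_0_le_if_lm_norm_le_1:
  fixes \<phi> :: "'a::euclidean_space \<Rightarrow> real \<Rightarrow> real"
  assumes "lm_norm \<phi> p w f \<le> 1" "0 < p" "0 < R" "0 < \<phi> 0 R"
  shows "(\<integral>\<^sup>+x\<in>ball 0 R. ennreal (\<bar>f x\<bar> powr p * w x) \<partial>lebesgue) \<le> ennreal (\<phi> 0 R)"
proof -
  let ?I = "\<integral>\<^sup>+x\<in>ball 0 R. ennreal (\<bar>f x\<bar> powr p * w x) \<partial>lebesgue"
  have "enn_root (1 / p) (?I / ennreal (\<phi> 0 R)) \<le> 1"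
    using assms unfolding lm_norm_def by (meson SUP_le_iff greaterThan_iff)
  then have "?I / ennreal (\<phi> 0 R) \<le> 1"
    using \<open>0 < p\<close> by (simp add: enn_root_le_iff enn_root_ennreal)
  then have "?I / ennreal (\<phi> 0 R) * ennreal (\<phi> 0 R) \<le> ennreal (\<phi> 0 R)"
    using mult_right_mono by fastforce
  then show ?thesis
    using \<open>0 < \<phi> 0 R\<close> by (simp add: ennreal_divide_times)
qed

section \<open>Duality for weighted L^p on a set\<close>

lemma measurable_w_inv [measurable]:
  assumes [measurable]: "w \<in> borel_measurable M"
  shows "w_inv w \<in> borel_measurable M"
  unfolding w_inv_def by measurable

lemma measurable_w_dual_power [measurable]:
  assumes [measurable]: "w \<in> borel_measurable M"
  shows "w_dual_power p w \<in> borel_measurable M"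
  unfolding w_dual_power_def by measurable

lemma ess_sup_on_eq_esssup:
  assumes "g \<in> borel_measurable lebesgue" "B \<in> sets lebesgue"
  shows "ess_sup_on B g = esssup lebesgue (\<lambda>x. g x * indicator B x)"
proof -
  have "(x \<in> B \<longrightarrow> g x \<le> z) \<longleftrightarrow> g x * indicator B x \<le> z" for x z
    by (simp add: indicator_def)
  then show ?thesis
    using assms by (simp add: ess_sup_on_def esssup_eq_AE)
qed

lemma AE_le_ess_sup_on:
  assumes "g \<in> borel_measurable lebesgue" "B \<in> sets lebesgue"
  shows "AE x in lebesgue. x \<in> B \<longrightarrow> g x \<le> ess_sup_on B g"
  using esssup_AE[where f = "\<lambda>x. g x * indicator B x" and M = lebesgue]
  by (auto simp: ess_sup_on_eq_esssup[OF assms] elim!: eventually_mono)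

lemma emeasure_above_ess_sup_on_pos:
  assumes "g \<in> borel_measurable lebesgue" "B \<in> sets lebesgue" "z < ess_sup_on B g"
  shows "0 < emeasure lebesgue {x \<in> B. z < g x}"
proof -
  have "{x \<in> space lebesgue. z < g x * indicator B x} = {x \<in> B. z < g x}"
    by (auto simp: indicator_def)
  then show ?thesis
    using esssup_pos_measure[where f = "\<lambda>x. g x * indicator B x" and M = lebesgue and z = z] assms
    by (simp add: ess_sup_on_eq_esssup)
qed

definition Ap_dual_factor :: "real \<Rightarrow> ('a::euclidean_space \<Rightarrow> real) \<Rightarrow> 'a set \<Rightarrow> ennreal" where
  "Ap_dual_factor p w B = (if p = 1 then ess_sup_on B (w_inv w)
     else enn_root ((p - 1) / p) (\<integral>\<^sup>+x\<in>B. w_dual_power p w x \<partial>lebesgue))"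

text \<open>The norm of \<chi>_B in the Koethe dual of L^p(w,B), taken over the ball of radius M^(1/p).\<close>

definition L1_sup_weighted_Lp_ball :: "real \<Rightarrow> ('a::euclidean_space \<Rightarrow> real) \<Rightarrow> 'a set \<Rightarrow> real \<Rightarrow> ennreal" where
  "L1_sup_weighted_Lp_ball p w B M = (SUP f\<in>{f \<in> borel_measurable lebesgue.
      (\<integral>\<^sup>+x\<in>B. ennreal (\<bar>f x\<bar> powr p * w x) \<partial>lebesgue) \<le> ennreal M}.
    \<integral>\<^sup>+x\<in>B. ennreal \<bar>f x\<bar> \<partial>lebesgue)"

lemma set_nn_integral_le_ess_sup_w_inv:
  assumes [measurable]: "w \<in> borel_measurable lebesgue" "f \<in> borel_measurable lebesgue"
      "B \<in> sets lebesgue"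
    and w_nonneg: "\<And>x. 0 \<le> w x"
    and "0 < M" and I: "(\<integral>\<^sup>+x\<in>B. ennreal (\<bar>f x\<bar> * w x) \<partial>lebesgue) \<le> ennreal M"
  shows "(\<integral>\<^sup>+x\<in>B. ennreal \<bar>f x\<bar> \<partial>lebesgue) \<le> ennreal M * ess_sup_on B (w_inv w)"
proof (cases "ess_sup_on B (w_inv w) = top")
  case True
  then show ?thesis using \<open>0 < M\<close> by (simp add: ennreal_mult_top)
next
  case False
  let ?S = "ess_sup_on B (w_inv w)"
  have "AE x in lebesgue. ennreal \<bar>f x\<bar> * indicator B x
      \<le> ?S * (ennreal (\<bar>f x\<bar> * w x) * indicator B x)"
  proof (rule eventually_mono)
    show "AE x in lebesgue. x \<in> B \<longrightarrow> w_inv w x \<le> ?S"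
      by (intro AE_le_ess_sup_on) measurable
  next
    fix x assume le: "x \<in> B \<longrightarrow> w_inv w x \<le> ?S"
    show "ennreal \<bar>f x\<bar> * indicator B x \<le> ?S * (ennreal (\<bar>f x\<bar> * w x) * indicator B x)"
    proof (cases "x \<in> B")
      case True
      then have "w x \<noteq> 0" "ennreal (1 / w x) \<le> ?S"
        using le False by (auto simp: w_inv_def top_unique split: if_splits)
      then have "ennreal (1 / w x) * ennreal (\<bar>f x\<bar> * w x) \<le> ?S * ennreal (\<bar>f x\<bar> * w x)"
        by (intro mult_right_mono) auto
      moreover have "ennreal (1 / w x) * ennreal (\<bar>f x\<bar> * w x) = ennreal \<bar>f x\<bar>"
        using \<open>w x \<noteq> 0\<close> w_nonneg[of x] by (simp add: ennreal_mult''[symmetric])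
      ultimately show ?thesis using True by simp
    qed simp
  qed
  then have "(\<integral>\<^sup>+x\<in>B. ennreal \<bar>f x\<bar> \<partial>lebesgue) \<le> ?S * (\<integral>\<^sup>+x\<in>B. ennreal (\<bar>f x\<bar> * w x) \<partial>lebesgue)"
    by (subst nn_integral_cmult[symmetric]) (auto intro: nn_integral_mono_AE)
  also have "\<dots> \<le> ?S * ennreal M"
    using I by (rule mult_left_mono) simp
  finally show ?thesis by (simp add: mult.commute)
qed

lemma dual_exponent_powr_identities:
  fixes p w y :: real
  assumes "1 < p" "0 < w" "0 \<le> y"
  shows "(w powr (1 - p / (p - 1))) powr p * w = w powr (1 - p / (p - 1))"
    and "(y powr p * w) powr (1 / p) * (w powr (1 - p / (p - 1))) powr ((p - 1) / p) = y"
proof -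
  let ?e = "1 - p / (p - 1)"
  have exps: "?e * p + 1 = ?e" "?e * ((p - 1) / p) + 1 / p = 0"
    using assms(1) by (simp_all add: field_simps)
  have "(w powr ?e) powr p * w = w powr (?e * p + 1)"
    using assms(2) by (simp add: powr_powr powr_add)
  then show "(w powr ?e) powr p * w = w powr ?e"
    using exps(1) by simp
  have "(y powr p * w) powr (1 / p) * (w powr ?e) powr ((p - 1) / p)
      = y * w powr (?e * ((p - 1) / p) + 1 / p)"
    using assms by (simp add: powr_mult powr_powr powr_add)
  then show "(y powr p * w) powr (1 / p) * (w powr ?e) powr ((p - 1) / p) = y"
    using exps(2) assms(2) by simp
qed

lemma set_nn_integral_le_Holder_dual_power:
  assumes "1 < p" and [measurable]: "w \<in> borel_measurable lebesgue" "f \<in> borel_measurable lebesgue"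
      "B \<in> sets lebesgue"
    and w_nonneg: "\<And>x. 0 \<le> w x"
    and "0 < M" and I: "(\<integral>\<^sup>+x\<in>B. ennreal (\<bar>f x\<bar> powr p * w x) \<partial>lebesgue) \<le> ennreal M"
  shows "(\<integral>\<^sup>+x\<in>B. ennreal \<bar>f x\<bar> \<partial>lebesgue)
    \<le> ennreal (M powr (1 / p)) * enn_root ((p - 1) / p) (\<integral>\<^sup>+x\<in>B. w_dual_power p w x \<partial>lebesgue)"
proof (cases "(\<integral>\<^sup>+x\<in>B. w_dual_power p w x \<partial>lebesgue) = top")
  case True
  then show ?thesis using \<open>0 < M\<close> by (simp add: ennreal_mult_top)
next
  case False
  have "AE x in lebesgue. w_dual_power p w x * indicator B x \<noteq> top"
    using nn_integral_PInf_AE[where f = "\<lambda>x. w_dual_power p w x * indicator B x" and M = lebesgue]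
      False by simp
  then have pos: "AE x in lebesgue. x \<in> B \<longrightarrow> 0 < w x"
    using w_nonneg by (auto simp: w_dual_power_def less_le elim!: eventually_mono)
  define F where "F x = \<bar>f x\<bar> powr p * w x * indicator B x" for x
  \<comment> \<open>G is 0 where w is, while w_dual_power is \<infinity> there; they agree a.e. on B by pos.\<close>
  define G where "G x = w x powr (1 - p / (p - 1)) * indicator B x" for x
  have [measurable]: "F \<in> borel_measurable lebesgue" "G \<in> borel_measurable lebesgue"
    unfolding F_def G_def by measurable
  have "(\<integral>\<^sup>+x\<in>B. ennreal \<bar>f x\<bar> \<partial>lebesgue)
      = (\<integral>\<^sup>+x. ennreal (F x powr (1 / p) * G x powr ((p - 1) / p)) \<partial>lebesgue)"
    using pos by (intro nn_integral_cong_AE)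
      (auto simp: F_def G_def dual_exponent_powr_identities \<open>1 < p\<close> indicator_def elim!: eventually_mono)
  also have "\<dots> \<le> enn_root (1 / p) (\<integral>\<^sup>+x. ennreal (F x) \<partial>lebesgue)
      * enn_root ((p - 1) / p) (\<integral>\<^sup>+x. ennreal (G x) \<partial>lebesgue)"
    using \<open>1 < p\<close> w_nonneg by (intro nn_integral_Holder) (auto simp: F_def G_def field_simps)
  also have "\<dots> \<le> enn_root (1 / p) (ennreal M)
      * enn_root ((p - 1) / p) (\<integral>\<^sup>+x\<in>B. w_dual_power p w x \<partial>lebesgue)"
  proof -
    have "(\<integral>\<^sup>+x. ennreal (F x) \<partial>lebesgue) = (\<integral>\<^sup>+x\<in>B. ennreal (\<bar>f x\<bar> powr p * w x) \<partial>lebesgue)"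
      by (intro nn_integral_cong) (simp add: F_def indicator_def)
    moreover have "(\<integral>\<^sup>+x. ennreal (G x) \<partial>lebesgue) = (\<integral>\<^sup>+x\<in>B. w_dual_power p w x \<partial>lebesgue)"
      using pos by (intro nn_integral_cong_AE)
        (auto simp: G_def w_dual_power_def indicator_def elim!: eventually_mono)
    ultimately show ?thesis
      using I \<open>1 < p\<close> by (auto intro!: mult_right_mono enn_root_mono)
  qed
  finally show ?thesis
    using \<open>0 < M\<close> by (simp add: enn_root_ennreal)
qed

lemma L1_sup_weighted_Lp_ball_le:
  assumes "1 \<le> p" and [measurable]: "w \<in> borel_measurable lebesgue" "B \<in> sets lebesgue"
    and "\<And>x. 0 \<le> w x" and "0 < M"
  shows "L1_sup_weighted_Lp_ball p w B M \<le> ennreal (M powr (1 / p)) * Ap_dual_factor p w B"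
  unfolding L1_sup_weighted_Lp_ball_def
proof (rule SUP_least)
  fix f assume "f \<in> {f \<in> borel_measurable lebesgue.
    (\<integral>\<^sup>+x\<in>B. ennreal (\<bar>f x\<bar> powr p * w x) \<partial>lebesgue) \<le> ennreal M}"
  then have [measurable]: "f \<in> borel_measurable lebesgue"
    and I: "(\<integral>\<^sup>+x\<in>B. ennreal (\<bar>f x\<bar> powr p * w x) \<partial>lebesgue) \<le> ennreal M" by auto
  show "(\<integral>\<^sup>+x\<in>B. ennreal \<bar>f x\<bar> \<partial>lebesgue) \<le> ennreal (M powr (1 / p)) * Ap_dual_factor p w B"
  proof (cases "p = 1")
    case True
    then show ?thesis
      using set_nn_integral_le_ess_sup_w_inv[of w f B M] I assms by (simp add: Ap_dual_factor_def)
  next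
    case False
    then show ?thesis
      using set_nn_integral_le_Holder_dual_power[of p w f B M] I assms by (simp add: Ap_dual_factor_def)
  qed
qed

lemma L1_sup_weighted_Lp_ball_ge_scaled:
  assumes [measurable]: "w \<in> borel_measurable lebesgue" "B \<in> sets lebesgue" "h \<in> borel_measurable lebesgue"
    and "\<And>x. 0 \<le> h x" and "0 \<le> a"
    and I: "ennreal (a powr p) * (\<integral>\<^sup>+x\<in>B. ennreal (h x powr p * w x) \<partial>lebesgue) \<le> ennreal M"
  shows "ennreal a * (\<integral>\<^sup>+x\<in>B. ennreal (h x) \<partial>lebesgue) \<le> L1_sup_weighted_Lp_ball p w B M"
  unfolding L1_sup_weighted_Lp_ball_def
proof (rule SUP_upper2)
  let ?f = "\<lambda>x. a * h x"
  have "(\<integral>\<^sup>+x\<in>B. ennreal (\<bar>?f x\<bar> powr p * w x) \<partial>lebesgue)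
      = ennreal (a powr p) * (\<integral>\<^sup>+x\<in>B. ennreal (h x powr p * w x) \<partial>lebesgue)"
    using assms by (simp add: powr_mult ennreal_mult' mult.assoc flip: nn_integral_cmult)
  then show "?f \<in> {f \<in> borel_measurable lebesgue.
      (\<integral>\<^sup>+x\<in>B. ennreal (\<bar>f x\<bar> powr p * w x) \<partial>lebesgue) \<le> ennreal M}"
    using I by simp
  show "ennreal a * (\<integral>\<^sup>+x\<in>B. ennreal (h x) \<partial>lebesgue) \<le> (\<integral>\<^sup>+x\<in>B. ennreal \<bar>?f x\<bar> \<partial>lebesgue)"
    using assms by (simp add: ennreal_mult mult.assoc flip: nn_integral_cmult)
qed

lemma L1_sup_weighted_Lp_ball_ge_level_set:
  assumes [measurable]: "w \<in> borel_measurable lebesgue" "B \<in> sets lebesgue" "E \<in> sets lebesgue"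
    and "E \<subseteq> B" "emeasure lebesgue E = ennreal e" "0 < e"
    and "0 < t" "\<And>x. x \<in> E \<Longrightarrow> w x \<le> 1 / t" and "0 < M"
  shows "ennreal (M * t) \<le> L1_sup_weighted_Lp_ball 1 w B M"
proof -
  define a where "a = M * t / e"
  have "(\<integral>\<^sup>+x\<in>B. ennreal (indicator E x powr 1 * w x) \<partial>lebesgue)
      \<le> (\<integral>\<^sup>+x. ennreal (1 / t) * indicator E x \<partial>lebesgue)"
    using assms(4,8) by (intro nn_integral_mono) (auto simp: indicator_def ennreal_leI)
  also have "\<dots> = ennreal (e / t)"
    using assms by (simp add: nn_integral_cmult_indicator ennreal_mult''[symmetric])
  finally have "ennreal (a powr 1) * (\<integral>\<^sup>+x\<in>B. ennreal (indicator E x powr 1 * w x) \<partial>lebesgue)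
      \<le> ennreal M"
    using assms by (auto simp: a_def ennreal_mult''[symmetric] intro: order.trans[OF mult_left_mono])
  then have "ennreal a * (\<integral>\<^sup>+x\<in>B. ennreal (indicator E x) \<partial>lebesgue) \<le> L1_sup_weighted_Lp_ball 1 w B M"
    using assms by (intro L1_sup_weighted_Lp_ball_ge_scaled) (auto simp: a_def)
  moreover have "(\<integral>\<^sup>+x\<in>B. ennreal (indicator E x) \<partial>lebesgue) = (\<integral>\<^sup>+x. indicator E x \<partial>lebesgue)"
    using assms(4) by (intro nn_integral_cong) (auto simp: indicator_def)
  ultimately show ?thesis
    using assms by (simp add: a_def ennreal_mult''[symmetric])
qed

lemma ennreal_mult_le_if_le_below:
  fixes S D :: ennreal
  assumes "0 < M" and below: "\<And>t. 0 < t \<Longrightarrow> ennreal t < S \<Longrightarrow> ennreal (M * t) \<le> D"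
  shows "ennreal M * S \<le> D"
proof -
  have "S \<le> D * ennreal (1 / M)"
  proof (rule dense_le)
    fix y assume "y < S"
    then have "y \<noteq> top" by (auto simp: top_unique)
    then obtain t where "y = ennreal t" "0 \<le> t" by (cases y) auto
    show "y \<le> D * ennreal (1 / M)"
    proof (cases "t = 0")
      case False
      then have "ennreal (M * t) * ennreal (1 / M) \<le> D * ennreal (1 / M)"
        using below[of t] \<open>y = ennreal t\<close> \<open>0 \<le> t\<close> \<open>y < S\<close> by (auto intro: mult_right_mono)
      then show ?thesis
        using \<open>y = ennreal t\<close> \<open>0 < M\<close> by (simp add: ennreal_mult''[symmetric])
    qed (use \<open>y = ennreal t\<close> in simp)
  qed
  then have "ennreal M * S \<le> ennreal M * (D * ennreal (1 / M))"
    by (rule mult_left_mono) simp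
  also have "\<dots> = D * ennreal (M * (1 / M))"
    using \<open>0 < M\<close> by (subst ennreal_mult'') (auto simp: ac_simps)
  finally show ?thesis
    using \<open>0 < M\<close> by simp
qed

lemma ess_sup_w_inv_le_L1_sup_weighted_Lp_ball:
  assumes [measurable]: "w \<in> borel_measurable lebesgue" "B \<in> sets lebesgue"
    and "emeasure lebesgue B \<noteq> top" and "0 < M"
  shows "ennreal M * ess_sup_on B (w_inv w) \<le> L1_sup_weighted_Lp_ball 1 w B M"
proof -
  let ?S = "ess_sup_on B (w_inv w)" and ?D = "L1_sup_weighted_Lp_ball 1 w B M"
  have level: "ennreal (M * t) \<le> ?D" if "0 < t" "ennreal t < ?S" for t
  proof -
    define E where "E = {x \<in> B. ennreal t < w_inv w x}"
    have [measurable]: "E \<in> sets lebesgue" by (simp add: E_def)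
    have "0 < emeasure lebesgue E"
      unfolding E_def using that by (intro emeasure_above_ess_sup_on_pos) auto
    moreover have "emeasure lebesgue E \<noteq> top"
      using emeasure_mono[of E B lebesgue] assms(3) by (auto simp: E_def top_unique)
    moreover have "w x \<le> 1 / t" if "x \<in> E" for x
    proof (cases "w x = 0")
      case False
      then have "t < 1 / w x"
        using that \<open>0 < t\<close> by (simp add: E_def w_inv_def ennreal_less_iff)
      moreover have "0 < w x"
        using calculation \<open>0 < t\<close> zero_less_divide_1_iff[of "w x"] by linarith
      ultimately show ?thesis
        using \<open>0 < t\<close> by (simp add: field_simps)
    qed (use \<open>0 < t\<close> in simp)
    ultimately show ?thesis
      using \<open>0 < t\<close> \<open>0 < M\<close> emeasure_eq_ennreal_measure[of lebesgue E]
      by (intro L1_sup_weighted_Lp_ball_ge_level_set[where E = E and e = "measure lebesgue E"])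
        (auto simp: E_def)
  qed
  show ?thesis
    using \<open>0 < M\<close> level by (rule ennreal_mult_le_if_le_below)
qed

text \<open>Functions concentrated on {w = 0} cost nothing in L^p(w).\<close>

lemma L1_sup_weighted_Lp_ball_eq_top_if_zero_set:
  assumes [measurable]: "w \<in> borel_measurable lebesgue" "B \<in> sets lebesgue"
    and "emeasure lebesgue B \<noteq> top" and "0 < emeasure lebesgue {x \<in> B. w x = 0}"
  shows "L1_sup_weighted_Lp_ball p w B M = top"
proof -
  define Z where "Z = {x \<in> B. w x = 0}"
  have [measurable]: "Z \<in> sets lebesgue" by (simp add: Z_def)
  have "emeasure lebesgue Z \<noteq> top"
    using emeasure_mono[of Z B lebesgue] assms(3) by (auto simp: Z_def top_unique)
  then obtain z where z: "emeasure lebesgue Z = ennreal z" "0 < z"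
    using assms(4) by (cases "emeasure lebesgue Z") (auto simp: Z_def)
  have bound: "ennreal (a * z) \<le> L1_sup_weighted_Lp_ball p w B M" if "0 \<le> a" for a
  proof -
    have "(\<integral>\<^sup>+x\<in>B. ennreal (indicator Z x powr p * w x) \<partial>lebesgue) = 0"
      by (subst nn_integral_cong[where v = "\<lambda>_. 0"]) (auto simp: Z_def indicator_def)
    then have "ennreal a * (\<integral>\<^sup>+x\<in>B. ennreal (indicator Z x) \<partial>lebesgue) \<le> L1_sup_weighted_Lp_ball p w B M"
      using that by (intro L1_sup_weighted_Lp_ball_ge_scaled) auto
    moreover have "(\<integral>\<^sup>+x\<in>B. ennreal (indicator Z x) \<partial>lebesgue) = (\<integral>\<^sup>+x. indicator Z x \<partial>lebesgue)"
      by (intro nn_integral_cong) (auto simp: Z_def indicator_def)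
    ultimately show ?thesis
      using z that by (simp add: ennreal_mult)
  qed
  show ?thesis
  proof (rule ccontr)
    assume "L1_sup_weighted_Lp_ball p w B M \<noteq> top"
    then obtain d where d: "L1_sup_weighted_Lp_ball p w B M = ennreal d" "0 \<le> d"
      by (cases "L1_sup_weighted_Lp_ball p w B M") auto
    then have "ennreal ((d + 1) / z * z) \<le> ennreal d"
      using bound[of "(d + 1) / z"] z by simp
    then show False
      using z d by simp
  qed
qed

lemma truncated_dual_power_le_L1_sup_weighted_Lp_ball:
  assumes "1 < p" and [measurable]: "w \<in> borel_measurable lebesgue" "B \<in> sets lebesgue" "E \<in> sets lebesgue"
    and "E \<subseteq> B" and w_nonneg: "\<And>x. 0 \<le> w x" and "0 < M"
    and fin: "(\<integral>\<^sup>+x\<in>E. ennreal (w x powr (1 - p / (p - 1))) \<partial>lebesgue) \<noteq> top"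
  shows "ennreal (M powr (1 / p)) * enn_root ((p - 1) / p) (\<integral>\<^sup>+x\<in>E. ennreal (w x powr (1 - p / (p - 1))) \<partial>lebesgue)
    \<le> L1_sup_weighted_Lp_ball p w B M"
proof -
  define g where "g x = w x powr (1 - p / (p - 1))" for x
  define h where "h x = g x * indicator E x" for x
  have [measurable]: "h \<in> borel_measurable lebesgue" unfolding h_def g_def by measurable
  obtain i where i: "(\<integral>\<^sup>+x\<in>E. ennreal (g x) \<partial>lebesgue) = ennreal i" "0 \<le> i"
    using fin by (cases "\<integral>\<^sup>+x\<in>E. ennreal (g x) \<partial>lebesgue") (auto simp: g_def)
  have hB: "(\<integral>\<^sup>+x\<in>B. ennreal (h x) \<partial>lebesgue) = ennreal i"
    using i \<open>E \<subseteq> B\<close> by (subst i(1)[symmetric], intro nn_integral_cong) (auto simp: h_def indicator_def)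
  \<comment> \<open>a h is the extremal function of Hoelder's inequality; the identity also holds where
    w = 0, since then g = 0.\<close>
  have "h x powr p * w x = h x" for x
    using dual_exponent_powr_identities(1)[OF \<open>1 < p\<close>, of "w x"] w_nonneg[of x] \<open>1 < p\<close>
    by (cases "w x = 0") (auto simp: h_def g_def indicator_def less_le)
  then have hpB: "(\<integral>\<^sup>+x\<in>B. ennreal (h x powr p * w x) \<partial>lebesgue) = ennreal i"
    using hB by simp
  show ?thesis
  proof (cases "i = 0")
    case False
    define a where "a = (M / i) powr (1 / p)"
    have "a powr p = M / i"
      using \<open>1 < p\<close> \<open>0 < M\<close> i(2) by (simp add: a_def powr_powr)
    then have "ennreal (a powr p) * (\<integral>\<^sup>+x\<in>B. ennreal (h x powr p * w x) \<partial>lebesgue) = ennreal M"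
      using hpB False i(2) by (simp flip: ennreal_mult'')
    then have le: "ennreal a * ennreal i \<le> L1_sup_weighted_Lp_ball p w B M"
      using w_nonneg by (subst hB[symmetric], intro L1_sup_weighted_Lp_ball_ge_scaled) (auto simp: h_def g_def a_def)
    have "a * i = M powr (1 / p) * (i powr 1 / i powr (1 / p))"
      using False i(2) \<open>0 < M\<close> by (simp add: a_def powr_divide)
    moreover have "1 - 1 / p = (p - 1) / p"
      using \<open>1 < p\<close> by (simp add: field_simps)
    ultimately have "a * i = M powr (1 / p) * i powr ((p - 1) / p)"
      by (metis powr_diff)
    then show ?thesis
      using le i by (simp add: g_def enn_root_ennreal ennreal_mult''[symmetric])
  qed (use i in \<open>simp add: g_def\<close>)
qed

lemma dual_power_le_L1_sup_weighted_Lp_ball: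
  assumes "1 < p" and [measurable]: "w \<in> borel_measurable lebesgue" "B \<in> sets lebesgue"
    and w_nonneg: "\<And>x. 0 \<le> w x" and "0 < M" and "emeasure lebesgue B \<noteq> top"
    and null: "emeasure lebesgue {x \<in> B. w x = 0} = 0"
  shows "ennreal (M powr (1 / p)) * enn_root ((p - 1) / p) (\<integral>\<^sup>+x\<in>B. w_dual_power p w x \<partial>lebesgue)
    \<le> L1_sup_weighted_Lp_ball p w B M"
proof -
  define g where "g x = w x powr (1 - p / (p - 1))" for x
  define E where "E N = {x \<in> B. g x \<le> real N}" for N :: nat
  have E_sets [measurable]: "E N \<in> sets lebesgue" for N by (simp add: E_def g_def)
  let ?h = "\<lambda>N x. ennreal (g x) * indicator (E N) x"
  have ae: "AE x in lebesgue. x \<in> B \<longrightarrow> w x \<noteq> 0"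
    using null by (intro AE_I'[of "{x \<in> B. w x = 0}"]) (auto intro: null_setsI)
  have "(\<integral>\<^sup>+x\<in>B. w_dual_power p w x \<partial>lebesgue) = (\<integral>\<^sup>+x. (SUP N. ?h N x) \<partial>lebesgue)"
  proof (rule nn_integral_cong_AE, rule eventually_mono[OF ae])
    fix x assume "x \<in> B \<longrightarrow> w x \<noteq> 0"
    obtain N :: nat where "g x \<le> real N" using real_arch_simple by blast
    then have "(SUP N. ?h N x) = ennreal (g x) * indicator B x"
      by (intro order.antisym SUP_least SUP_upper2[of N]) (auto simp: E_def indicator_def)
    with \<open>x \<in> B \<longrightarrow> w x \<noteq> 0\<close> show "w_dual_power p w x * indicator B x = (SUP N. ?h N x)"
      by (auto simp: w_dual_power_def g_def indicator_def)
  qed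
  also have "\<dots> = (SUP N. \<integral>\<^sup>+x\<in>E N. ennreal (g x) \<partial>lebesgue)"
    by (intro nn_integral_monotone_convergence_SUP)
      (auto simp: incseq_def le_fun_def E_def g_def indicator_def)
  finally have J: "(\<integral>\<^sup>+x\<in>B. w_dual_power p w x \<partial>lebesgue) = (SUP N. \<integral>\<^sup>+x\<in>E N. ennreal (g x) \<partial>lebesgue)" .
  have fin: "(\<integral>\<^sup>+x\<in>E N. ennreal (g x) \<partial>lebesgue) \<noteq> top" for N
  proof -
    have "(\<integral>\<^sup>+x\<in>E N. ennreal (g x) \<partial>lebesgue) \<le> (\<integral>\<^sup>+x. ennreal (real N) * indicator B x \<partial>lebesgue)"
      by (intro nn_integral_mono) (auto simp: E_def indicator_def ennreal_leI)
    also have "\<dots> < top"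
      using assms(6) by (simp add: nn_integral_cmult_indicator ennreal_mult_less_top less_top)
    finally show ?thesis by simp
  qed
  have "ennreal (M powr (1 / p)) * enn_root ((p - 1) / p) (\<integral>\<^sup>+x\<in>E N. ennreal (g x) \<partial>lebesgue)
      \<le> L1_sup_weighted_Lp_ball p w B M" for N
    using fin[of N] unfolding g_def
    by (intro truncated_dual_power_le_L1_sup_weighted_Lp_ball[OF \<open>1 < p\<close> assms(2,3) E_sets])
      (auto simp: E_def w_nonneg \<open>0 < M\<close>)
  then show ?thesis
    using \<open>1 < p\<close> by (simp add: J enn_root_SUP SUP_mult_left_ennreal SUP_least)
qed

lemma L1_sup_weighted_Lp_ball_eq:
  assumes "1 \<le> p" and [measurable]: "w \<in> borel_measurable lebesgue" "B \<in> sets lebesgue"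
    and "\<And>x. 0 \<le> w x" and "emeasure lebesgue B \<noteq> top" and "0 < M"
  shows "L1_sup_weighted_Lp_ball p w B M = ennreal (M powr (1 / p)) * Ap_dual_factor p w B"
proof (rule order.antisym)
  show "L1_sup_weighted_Lp_ball p w B M \<le> ennreal (M powr (1 / p)) * Ap_dual_factor p w B"
    using assms by (intro L1_sup_weighted_Lp_ball_le) auto
  consider "p = 1" | "1 < p" "emeasure lebesgue {x \<in> B. w x = 0} = 0"
    | "0 < emeasure lebesgue {x \<in> B. w x = 0}"
    using \<open>1 \<le> p\<close> by (metis not_gr_zero order_le_less)
  then show "ennreal (M powr (1 / p)) * Ap_dual_factor p w B \<le> L1_sup_weighted_Lp_ball p w B M"
  proof cases
    case 1
    then show ?thesis
      using assms ess_sup_w_inv_le_L1_sup_weighted_Lp_ball[of w B M] by (simp add: Ap_dual_factor_def)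
  next
    case 2
    then show ?thesis
      using assms dual_power_le_L1_sup_weighted_Lp_ball[of p w B M] by (simp add: Ap_dual_factor_def)
  next
    case 3
    then show ?thesis
      using assms L1_sup_weighted_Lp_ball_eq_top_if_zero_set[of w B p M] by simp
  qed
qed

section \<open>Comparison of the two characteristics\<close>

lemma ennreal_abs_mult_indicator: "ennreal \<bar>f x * indicator A x\<bar> = ennreal \<bar>f x\<bar> * indicator A x"
  by (simp add: indicator_def)

lemma lm_dual_norm_indicator_ball_le:
  fixes \<phi> :: "'a::euclidean_space \<Rightarrow> real \<Rightarrow> real"
  assumes pos: "\<And>c r. 0 < r \<Longrightarrow> 0 < \<phi> c r" and "0 < p"
    and K: "\<And>s. 0 < s \<Longrightarrow> \<phi> 0 (2 * s) \<le> K * \<phi> 0 s"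
    and r: "0 < r" "r \<le> norm c"
  shows "lm_dual_norm \<phi> p w (indicator (ball c r))
    \<le> L1_sup_weighted_Lp_ball p w (ball c r) (K * \<phi> 0 (norm c))"
  unfolding lm_dual_norm_def
proof (rule SUP_least)
  fix f assume "f \<in> {f \<in> borel_measurable lebesgue. lm_norm \<phi> p w f \<le> 1}"
  then have f: "f \<in> borel_measurable lebesgue" "lm_norm \<phi> p w f \<le> 1" by auto
  have "0 < norm c" using r by linarith
  have "(\<integral>\<^sup>+x\<in>ball c r. ennreal (\<bar>f x\<bar> powr p * w x) \<partial>lebesgue)
      \<le> (\<integral>\<^sup>+x\<in>ball 0 (2 * norm c). ennreal (\<bar>f x\<bar> powr p * w x) \<partial>lebesgue)"
    using ball_subset_ball_0[OF r(2)] by (intro nn_integral_mono) (auto simp: indicator_def)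
  also have "\<dots> \<le> ennreal (\<phi> 0 (2 * norm c))"
    using f \<open>0 < p\<close> \<open>0 < norm c\<close> pos by (intro set_nn_integral_ball_0_le_if_lm_norm_le_1) auto
  also have "\<dots> \<le> ennreal (K * \<phi> 0 (norm c))"
    using K \<open>0 < norm c\<close> by (simp add: ennreal_leI)
  finally show "(\<integral>\<^sup>+x. ennreal \<bar>f x * indicator (ball c r) x\<bar> \<partial>lebesgue)
      \<le> L1_sup_weighted_Lp_ball p w (ball c r) (K * \<phi> 0 (norm c))"
    unfolding L1_sup_weighted_Lp_ball_def ennreal_abs_mult_indicator using f(1)
    by (intro SUP_upper) auto
qed

lemma lm_dual_norm_indicator_ball_ge:
  fixes \<phi> :: "'a::euclidean_space \<Rightarrow> real \<Rightarrow> real"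
  assumes pos: "\<And>c r. 0 < r \<Longrightarrow> 0 < \<phi> c r" and "0 < p"
    and K: "\<And>s R. 0 < s \<Longrightarrow> s / 2 < R \<Longrightarrow> \<phi> 0 s \<le> K * \<phi> 0 R"
    and r: "0 < r" "2 * r \<le> norm c"
  shows "L1_sup_weighted_Lp_ball p w (ball c r) (\<phi> 0 (norm c) / K)
    \<le> lm_dual_norm \<phi> p w (indicator (ball c r))"
  unfolding L1_sup_weighted_Lp_ball_def
proof (rule SUP_least)
  fix f assume "f \<in> {f \<in> borel_measurable lebesgue.
    (\<integral>\<^sup>+x\<in>ball c r. ennreal (\<bar>f x\<bar> powr p * w x) \<partial>lebesgue) \<le> ennreal (\<phi> 0 (norm c) / K)}"
  then have f [measurable]: "f \<in> borel_measurable lebesgue"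
    and I: "(\<integral>\<^sup>+x\<in>ball c r. ennreal (\<bar>f x\<bar> powr p * w x) \<partial>lebesgue) \<le> ennreal (\<phi> 0 (norm c) / K)"
    by auto
  define g where "g x = f x * indicator (ball c r) x" for x
  have g_supp: "g x = 0" if "x \<notin> ball c r" for x
    using that by (simp add: g_def)
  have "0 < norm c" using r by linarith
  then have "0 < \<phi> 0 (norm c)" "1 \<le> K"
    using pos K[of "norm c" "norm c"] by (auto simp: mult_le_cancel_right1)
  have g_int: "(\<integral>\<^sup>+x\<in>ball c r. ennreal (\<bar>g x\<bar> powr p * w x) \<partial>lebesgue)
      = (\<integral>\<^sup>+x\<in>ball c r. ennreal (\<bar>f x\<bar> powr p * w x) \<partial>lebesgue)"
    by (intro nn_integral_cong) (simp add: g_def indicator_def)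
  have "lm_norm \<phi> p w g
      \<le> enn_root (1 / p) ((\<integral>\<^sup>+x\<in>ball c r. ennreal (\<bar>g x\<bar> powr p * w x) \<partial>lebesgue) * ennreal (K / \<phi> 0 (norm c)))"
    by (rule lm_norm_le_if_supported_in_ball[where \<phi> = \<phi> and K = K, OF pos \<open>0 < p\<close> K r g_supp])
  also have "\<dots> \<le> enn_root (1 / p) (ennreal (\<phi> 0 (norm c) / K) * ennreal (K / \<phi> 0 (norm c)))"
    using \<open>0 < p\<close> I g_int by (auto intro!: enn_root_mono mult_right_mono)
  also have "\<dots> = 1"
    using \<open>0 < \<phi> 0 (norm c)\<close> \<open>1 \<le> K\<close> by (simp flip: ennreal_mult'')
  finally have "lm_norm \<phi> p w g \<le> 1" .
  moreover have "g \<in> borel_measurable lebesgue"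
    unfolding g_def by measurable
  ultimately have "(\<integral>\<^sup>+x. ennreal \<bar>g x * indicator (ball c r) x\<bar> \<partial>lebesgue)
      \<le> lm_dual_norm \<phi> p w (indicator (ball c r))"
    unfolding lm_dual_norm_def by (intro SUP_upper) auto
  moreover have "(\<integral>\<^sup>+x. ennreal \<bar>g x * indicator (ball c r) x\<bar> \<partial>lebesgue)
      = (\<integral>\<^sup>+x\<in>ball c r. ennreal \<bar>f x\<bar> \<partial>lebesgue)"
    by (intro nn_integral_cong) (simp add: g_def indicator_def)
  ultimately show "(\<integral>\<^sup>+x\<in>ball c r. ennreal \<bar>f x\<bar> \<partial>lebesgue) \<le> lm_dual_norm \<phi> p w (indicator (ball c r))"
    by simp
qed

lemma ennreal_mult_two_sided_bounds:
  fixes x y N D :: ennreal and k a :: real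
  assumes "0 < k" "0 < a"
    and N: "x * ennreal (1 / (k * a)) \<le> N" "N \<le> x * ennreal (k / a)"
    and D: "ennreal (a / k) * y \<le> D" "D \<le> ennreal (k * a) * y"
  shows "N * D \<le> ennreal (k\<^sup>2) * (x * y)" "x * y \<le> ennreal (k\<^sup>2) * (N * D)"
proof -
  have e1: "ennreal (k / a) * ennreal (k * a) = ennreal (k\<^sup>2)"
    using assms(1,2) by (simp add: power2_eq_square flip: ennreal_mult'')
  have e2: "ennreal (k\<^sup>2) * (ennreal (1 / (k * a)) * ennreal (a / k)) = 1"
    using assms(1,2) by (simp add: power2_eq_square flip: ennreal_mult'')
  have "N * D \<le> (x * ennreal (k / a)) * (ennreal (k * a) * y)"
    using N(2) D(2) by (rule mult_mono) auto
  also have "\<dots> = ennreal (k\<^sup>2) * (x * y)"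
    by (simp add: e1[symmetric] ac_simps)
  finally show "N * D \<le> ennreal (k\<^sup>2) * (x * y)" .
  have "x * y = (x * y) * (ennreal (k\<^sup>2) * (ennreal (1 / (k * a)) * ennreal (a / k)))"
    by (simp only: e2 mult_1_right)
  also have "\<dots> = ennreal (k\<^sup>2) * ((x * ennreal (1 / (k * a))) * (ennreal (a / k) * y))"
    by (simp only: ac_simps)
  also have "\<dots> \<le> ennreal (k\<^sup>2) * (N * D)"
    using N(1) D(1) by (intro mult_left_mono mult_mono) auto
  finally show "x * y \<le> ennreal (k\<^sup>2) * (N * D)" .
qed

lemma lm_norm_mult_dual_norm_indicator_ball_bounds:
  fixes \<phi> :: "'a::euclidean_space \<Rightarrow> real \<Rightarrow> real"
  assumes pos: "\<And>c r. 0 < r \<Longrightarrow> 0 < \<phi> c r" and "1 \<le> p" and "0 < K"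
    and K_doubling: "\<And>s. 0 < s \<Longrightarrow> \<phi> 0 (2 * s) \<le> K * \<phi> 0 s"
    and K_increasing: "\<And>s R. 0 < s \<Longrightarrow> s / 2 < R \<Longrightarrow> \<phi> 0 s \<le> K * \<phi> 0 R"
    and w: "is_weight w" and r: "0 < r" "2 * r \<le> norm c"
  defines "ND \<equiv> lm_norm \<phi> p w (indicator (ball c r)) * lm_dual_norm \<phi> p w (indicator (ball c r))"
    and "X \<equiv> enn_root (1 / p) (\<integral>\<^sup>+x\<in>ball c r. ennreal (w x) \<partial>lebesgue) * Ap_dual_factor p w (ball c r)"
  shows "ND \<le> ennreal ((K powr (1 / p))\<^sup>2) * X" "X \<le> ennreal ((K powr (1 / p))\<^sup>2) * ND"
proof -
  have [measurable]: "w \<in> borel_measurable lebesgue" and w_nonneg: "\<And>x. 0 \<le> w x"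
    using w by (auto simp: is_weight_def)
  have "0 < p" "0 < norm c" "r \<le> norm c" using \<open>1 \<le> p\<close> r by auto
  define \<Phi> where "\<Phi> = \<phi> 0 (norm c)"
  define k a where "k = K powr (1 / p)" and "a = \<Phi> powr (1 / p)"
  have "0 < \<Phi>" using pos \<open>0 < norm c\<close> by (simp add: \<Phi>_def)
  then have "0 < k" "0 < a" "(1 / (K * \<Phi>)) powr (1 / p) = 1 / (k * a)" "(K / \<Phi>) powr (1 / p) = k / a"
      "(K * \<Phi>) powr (1 / p) = k * a" "(\<Phi> / K) powr (1 / p) = a / k"
    using \<open>0 < K\<close> by (simp_all add: k_def a_def powr_divide powr_mult)
  note powrs = this(3-6)
  let ?W = "\<integral>\<^sup>+x\<in>ball c r. ennreal (w x) \<partial>lebesgue"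
  let ?G = "Ap_dual_factor p w (ball c r)"
  have W: "(\<integral>\<^sup>+x\<in>ball c r. ennreal (\<bar>indicator (ball c r) x\<bar> powr p * w x) \<partial>lebesgue) = ?W"
    by (intro nn_integral_cong) (simp add: indicator_def)
  have root: "enn_root (1 / p) (?W * ennreal t) = enn_root (1 / p) ?W * ennreal (t powr (1 / p))"
    if "0 \<le> t" for t
    using that \<open>0 < p\<close> by (simp add: enn_root_mult enn_root_ennreal)
  have dual: "L1_sup_weighted_Lp_ball p w (ball c r) M = ennreal (M powr (1 / p)) * ?G" if "0 < M" for M
    using \<open>1 \<le> p\<close> w_nonneg that emeasure_lebesgue_ball_neq_top
    by (intro L1_sup_weighted_Lp_ball_eq) auto
  have "enn_root (1 / p) ?W * ennreal (1 / (k * a)) \<le> lm_norm \<phi> p w (indicator (ball c r))"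
    using lm_norm_ge_if_supported_in_ball[where \<phi> = \<phi> and K = K, OF pos \<open>0 < p\<close> K_doubling r(1) \<open>r \<le> norm c\<close>,
        of "indicator (ball c r)" w]
    using W root[of "1 / (K * \<Phi>)"] powrs \<open>0 < K\<close> \<open>0 < \<Phi>\<close> by (simp add: \<Phi>_def)
  moreover have "lm_norm \<phi> p w (indicator (ball c r)) \<le> enn_root (1 / p) ?W * ennreal (k / a)"
    using lm_norm_le_if_supported_in_ball[where \<phi> = \<phi> and K = K, OF pos \<open>0 < p\<close> K_increasing r, of "indicator (ball c r)" w]
    using W root[of "K / \<Phi>"] powrs \<open>0 < K\<close> \<open>0 < \<Phi>\<close> by (simp add: \<Phi>_def)
  moreover have "ennreal (a / k) * ?G \<le> lm_dual_norm \<phi> p w (indicator (ball c r))"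
    using lm_dual_norm_indicator_ball_ge[where \<phi> = \<phi> and K = K, OF pos \<open>0 < p\<close> K_increasing r, of w]
      dual[of "\<Phi> / K"] powrs \<open>0 < K\<close> \<open>0 < \<Phi>\<close> by (simp add: \<Phi>_def)
  moreover have "lm_dual_norm \<phi> p w (indicator (ball c r)) \<le> ennreal (k * a) * ?G"
    using lm_dual_norm_indicator_ball_le[where \<phi> = \<phi> and K = K, OF pos \<open>0 < p\<close> K_doubling r(1) \<open>r \<le> norm c\<close>, of w]
      dual[of "K * \<Phi>"] powrs \<open>0 < K\<close> \<open>0 < \<Phi>\<close> by (simp add: \<Phi>_def)
  ultimately show "ND \<le> ennreal ((K powr (1 / p))\<^sup>2) * X" "X \<le> ennreal ((K powr (1 / p))\<^sup>2) * ND"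
    using ennreal_mult_two_sided_bounds[OF \<open>0 < k\<close> \<open>0 < a\<close>] by (simp_all add: ND_def X_def k_def)
qed

lemma Ap_loc_const_eq_SUP:
  "Ap_loc_const p w = (SUP (c, r)\<in>{(c, r). 0 < r \<and> 4 * r < norm c}.
     enn_root (1 / p) (\<integral>\<^sup>+x\<in>ball c r. ennreal (w x) \<partial>lebesgue) * Ap_dual_factor p w (ball c r)
     / emeasure lebesgue (ball c r))"
proof -
  have "{(c, r). 0 < r \<and> r < norm c / 4} = {(c :: 'a, r). 0 < r \<and> 4 * r < norm c}" by auto
  then show ?thesis
    by (cases "p = 1") (simp_all add: Ap_loc_const_def Ap_dual_factor_def ennreal_times_divide ac_simps)
qed

lemma SUP_le_mult_SUP_ennreal:
  fixes f g :: "'a \<Rightarrow> ennreal"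
  assumes "\<And>i. i \<in> I \<Longrightarrow> f i \<le> c * g i"
  shows "(SUP i\<in>I. f i) \<le> c * (SUP i\<in>I. g i)"
  unfolding SUP_mult_left_ennreal using assms by (intro SUP_mono) auto

lemma A_loc_LM_const_comparable_Ap_loc_const:
  fixes \<phi> :: "'a::euclidean_space \<Rightarrow> real \<Rightarrow> real"
  assumes "1 \<le> p" and pos: "\<And>c r. 0 < r \<Longrightarrow> 0 < \<phi> c r" and "doubling \<phi>" and "reverse_doubling \<phi>"
  obtains C :: real where "0 < C"
    "\<And>w. is_weight w \<Longrightarrow> A_loc_LM_const \<phi> p w \<le> ennreal C * Ap_loc_const p w"
    "\<And>w. is_weight w \<Longrightarrow> Ap_loc_const p w \<le> ennreal C * A_loc_LM_const \<phi> p w"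
proof -
  obtain K where "1 \<le> K" and K: "\<And>c s. 0 < s \<Longrightarrow> \<phi> c (2 * s) \<le> K * \<phi> c s"
    "\<And>c s R. 0 < s \<Longrightarrow> s / 2 < R \<Longrightarrow> \<phi> c s \<le> K * \<phi> c R"
    using doubling_reverse_doubling_constant[OF pos assms(3,4)] by blast
  have "0 < K" using \<open>1 \<le> K\<close> by simp
  note bounds = lm_norm_mult_dual_norm_indicator_ball_bounds[where \<phi> = \<phi> and K = K,
      OF pos \<open>1 \<le> p\<close> \<open>0 < K\<close> K]
  show ?thesis
  proof (rule that[of "(K powr (1 / p))\<^sup>2"])
    show "0 < (K powr (1 / p))\<^sup>2" using \<open>1 \<le> K\<close> by simp
  qed (auto simp: A_loc_LM_const_def Ap_loc_const_eq_SUP ennreal_times_divide \<open>1 \<le> K\<close>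
      intro!: SUP_le_mult_SUP_ennreal divide_right_mono_ennreal bounds)
qed

theorem lemma6p2:
  fixes \<phi> :: "'a::euclidean_space \<Rightarrow> real \<Rightarrow> real" and p :: real
  assumes "1 \<le> p"
    and "\<And>c r. 0 < r \<Longrightarrow> 0 < \<phi> c r"
    and "doubling \<phi>" and "reverse_doubling \<phi>"
  shows "{w :: 'a \<Rightarrow> real. is_weight w \<and> A_loc_LM_const \<phi> p w < \<infinity>}
           = {w. is_weight w \<and> Ap_loc_const p w < \<infinity>}
         \<and> (\<exists>C1 C2 :: real. 0 < C1 \<and> 0 < C2 \<and>
             (\<forall>w :: 'a \<Rightarrow> real. is_weight w \<longrightarrow>
                A_loc_LM_const \<phi> p w \<le> ennreal C1 * Ap_loc_const p w \<and>
                Ap_loc_const p w \<le> ennreal C2 * A_loc_LM_const \<phi> p w))"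
proof -
  obtain C where "0 < C"
    and A_le: "\<And>w. is_weight w \<Longrightarrow> A_loc_LM_const \<phi> p w \<le> ennreal C * Ap_loc_const p w"
    and Ap_le: "\<And>w. is_weight w \<Longrightarrow> Ap_loc_const p w \<le> ennreal C * A_loc_LM_const \<phi> p w"
    using A_loc_LM_const_comparable_Ap_loc_const[OF assms] by blast
  have "A_loc_LM_const \<phi> p w < \<infinity> \<longleftrightarrow> Ap_loc_const p w < \<infinity>" if "is_weight w" for w
    using A_le[OF that] Ap_le[OF that]
    by (metis ennreal_mult_less_top ennreal_less_top infinity_ennreal_def le_less_trans)
  then show ?thesis
    using \<open>0 < C\<close> A_le Ap_le by blast
qed

end
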